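(* Let $L$ be a frame. For a class $\mathcal X$ of sublocales write $\mathrm{int}_{\mathcal X}(S)=\bigvee\{T\in\mathcal X\mid T\subseteq S\}$ (join in $\mathsf{Sl}(L)$). Then fit and $\mathrm{int}_{\mathcal X}$ restrict to mutually inverse order isomorphisms in each of the following cases: (1) $\{\mathrm{fit}(S)\mid S\in\mathcal S_b(L)\}\cong\{\mathrm{int}_{\mathcal S_{lc}(L)}(S)\mid S\in\mathcal S_o(L)\}$; (2) $\{\mathrm{fit}(S)\mid S\in\mathcal S_c(L)\}\cong\{\mathrm{int}_{\mathfrak c[L]}(S)\mid S\in\mathcal S_o(L)\}$; (3) $\{\mathrm{fit}(S)\mid S\in\mathcal S_k(L)\}\cong\{\mathrm{int}_{\mathcal S_{co}(L)}(S)\mid S\in\mathcal S_o(L)\}$; (4) $\{\mathrm{fit}(S)\mid S\in\mathcal S_{sp}(L)\}\cong\{\mathrm{int}_{\mathcal S_{op}(L)}(S)\mid S\in\mathcal S_o(L)\}=\{\mathsf{sp}(S)\mid S\in\mathcal S_o(L)\}$. In each case the isomorphism from right to left is $\mathrm{fit}$ and from left to right is the corresponding $\mathrm{int}_{\mathcal X}$; all posets are ordered by inclusion.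
   Context: A frame is a complete lattice $L$ with $(\bigvee A)\wedge b=\bigvee_{a\in A}(a\wedge b)$, Heyting implication $\to$. A sublocale is a subset closed under all meets with $a\to s\in S$ for $a\in L,s\in S$; sublocales form a coframe $\mathsf{Sl}(L)$ under inclusion with joins $\bigvee_i S_i=\{\bigwedge A\mid A\subseteq\bigcup_iS_i\}$. $\mathfrak o(a)=\{a\to b\mid b\in L\}$, $\mathfrak c(a)={\uparrow}a$, $\mathfrak c[L]=\{\mathfrak c(a)\mid a\in L\}$. $\mathrm{fit}(S)=\bigcap\{\mathfrak o(a)\mid S\subseteq\mathfrak o(a)\}$; $\mathcal S_o(L)$ is the set of fitted sublocales (intersections of open sublocales). $\mathcal S_{lc}(L)=\{\mathfrak c(x)\cap\mathfrak o(y)\mid x,y\in L\}$ (locally closed); $\mathcal S_b(L)$ is the set of joins of locally closed sublocales; $\mathcal S_c(L)$ the set of joins of closed sublocales. A sublocale $S$ is compact if $S\subseteq\bigvee_{a\in A}\mathfrak o(a)$ implies $S\subseteq\mathfrak o(a_1)\vee\dots\vee\mathfrak o(a_n)$ for finitely many $a_i\in A$; $\mathcal S_{co}(L)$ is the set of compact sublocales and $\mathcal S_k(L)$ the set of joins of them. For a prime $p$ ($p\ne1$, $x\wedge y\le p\Rightarrow x\le p$ or $y\le p$), $\mathfrak b(p)=\{p,1\}$; $\mathcal S_{op}(L)$ is the set of such one-point sublocales, $\mathcal S_{sp}(L)$ the set of their joins, and $\mathsf{sp}(S)=\bigvee\{\mathfrak b(p)\mid p\text{ prime},\ \mathfrak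 b(p)\subseteq S\}$. *)

theory Defs
  imports Main
begin

definition frame_law :: "'a::complete_lattice itself \<Rightarrow> bool" where
  "frame_law _ \<longleftrightarrow> (\<forall>(A::'a set) b. inf (Sup A) b = (SUP a\<in>A. inf a b))"

definition himp :: "'a::complete_lattice \<Rightarrow> 'a \<Rightarrow> 'a" where
  "himp a b = Sup {x. inf x a \<le> b}"

definition is_sublocale :: "'a::complete_lattice set \<Rightarrow> bool" where
  "is_sublocale S \<longleftrightarrow> (\<forall>A. A \<subseteq> S \<longrightarrow> Inf A \<in> S) \<and> (\<forall>a s. s \<in> S \<longrightarrow> himp a s \<in> S)"

text \<open>Join in the coframe Sl(L).\<close>
definition sl_join :: "'a::complete_lattice set set \<Rightarrow> 'a set" where
  "sl_join F = {Inf A | A. A \<subseteq> \<Union>F}"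

definition opn :: "'a::complete_lattice \<Rightarrow> 'a set" where
  "opn a = {himp a b | b. True}"

definition cls :: "'a::complete_lattice \<Rightarrow> 'a set" where
  "cls a = {x. a \<le> x}"

definition fit :: "'a::complete_lattice set \<Rightarrow> 'a set" where
  "fit S = \<Inter> {opn a | a. S \<subseteq> opn a}"

definition S_o :: "'a::complete_lattice set set" where
  "S_o = {\<Inter> F | F. F \<subseteq> range opn}"

definition S_lc :: "'a::complete_lattice set set" where
  "S_lc = {cls x \<inter> opn y | x y. True}"

definition S_b :: "'a::complete_lattice set set" where
  "S_b = {sl_join F | F. F \<subseteq> S_lc}"

definition closed_sublocales :: "'a::complete_lattice set set" where
  "closed_sublocales = range cls"

definition S_c :: "'a::complete_lattice set set" where
  "S_c = {sl_join F | F. F \<subseteq> closed_sublocales}"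

definition compact_sl :: "'a::complete_lattice set \<Rightarrow> bool" where
  "compact_sl S \<longleftrightarrow> (\<forall>A. S \<subseteq> sl_join (opn ` A) \<longrightarrow>
      (\<exists>B. B \<subseteq> A \<and> finite B \<and> S \<subseteq> sl_join (opn ` B)))"

definition S_co :: "'a::complete_lattice set set" where
  "S_co = {S. is_sublocale S \<and> compact_sl S}"

definition S_k :: "'a::complete_lattice set set" where
  "S_k = {sl_join F | F. F \<subseteq> S_co}"

definition prime_el :: "'a::complete_lattice \<Rightarrow> bool" where
  "prime_el p \<longleftrightarrow> p \<noteq> top \<and> (\<forall>x y. inf x y \<le> p \<longrightarrow> x \<le> p \<or> y \<le> p)"

definition bpt :: "'a::complete_lattice \<Rightarrow> 'a set" where
  "bpt p = {p, top}"

definition S_op :: "'a::complete_lattice set set" where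
  "S_op = {bpt p | p. prime_el p}"

definition S_sp :: "'a::complete_lattice set set" where
  "S_sp = {sl_join F | F. F \<subseteq> S_op}"

definition sp :: "'a::complete_lattice set \<Rightarrow> 'a set" where
  "sp S = sl_join {bpt p | p. prime_el p \<and> bpt p \<subseteq> S}"

definition intX :: "'a::complete_lattice set set \<Rightarrow> 'a set \<Rightarrow> 'a set" where
  "intX X S = sl_join {T \<in> X. T \<subseteq> S}"

definition mutual_order_iso :: "'b set set \<Rightarrow> 'c set set \<Rightarrow> ('b set \<Rightarrow> 'c set) \<Rightarrow> ('c set \<Rightarrow> 'b set) \<Rightarrow> bool" where
  "mutual_order_iso A B f g \<longleftrightarrow>
     (\<forall>x\<in>A. f x \<in> B) \<and> (\<forall>y\<in>B. g y \<in> A) \<and>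
     (\<forall>x\<in>A. g (f x) = x) \<and> (\<forall>y\<in>B. f (g y) = y) \<and>
     (\<forall>x\<in>A. \<forall>x'\<in>A. x \<subseteq> x' \<longleftrightarrow> f x \<subseteq> f x') \<and>
     (\<forall>y\<in>B. \<forall>y'\<in>B. y \<subseteq> y' \<longleftrightarrow> g y \<subseteq> g y')"

end

theory Submission
  imports Defs
begin

text \<open>
  For a fitted sublocale S, T \<subseteq> S iff fit T \<subseteq> S, so fit is left adjoint to the inclusion of
  the fitted sublocales. By the frame law each open sublocale is the set of fixed points of the
  monotone map a \<rightarrow> _, hence closed under all meets, and so is every fitted sublocale S.
  Consequently any join of members of a class X contained in S already lies in int_X(S), so
  T \<subseteq> S iff T \<subseteq> int_X(S) for every join T of members of X. Between joins of X and fitted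
  sublocales fit is therefore left adjoint to int_X, and any Galois connection restricts to
  mutually inverse order isomorphisms between the images of its two maps. Nothing about the
  particular classes of the four cases is used.
\<close>

lemma mutual_order_iso_images_of_galois_connection:
  assumes f_into: "f ` A \<subseteq> B" and g_into: "g ` B \<subseteq> A"
    and adjoint: "\<And>x y. x \<in> A \<Longrightarrow> y \<in> B \<Longrightarrow> f x \<subseteq> y \<longleftrightarrow> x \<subseteq> g y"
  shows "mutual_order_iso (f ` A) (g ` B) g f"
proof -
  have fB: "f x \<in> B" if "x \<in> A" for x
    using f_into that by blast
  have gA: "g y \<in> A" if "y \<in> B" for y
    using g_into that by blast
  have unit: "x \<subseteq> g (f x)" if "x \<in> A" for x
    using adjoint[OF that fB[OF that]] by simp
  have counit: "f (g y) \<subseteq> y" if "y \<in> B" for y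
    using adjoint[OF gA[OF that] that] by simp
  have f_mono: "f x \<subseteq> f x'" if "x \<in> A" "x' \<in> A" "x \<subseteq> x'" for x x'
    using adjoint[OF that(1) fB[OF that(2)]] unit[OF that(2)] that(3) by blast
  have g_mono: "g y \<subseteq> g y'" if "y \<in> B" "y' \<in> B" "y \<subseteq> y'" for y y'
    using adjoint[OF gA[OF that(1)] that(2)] counit[OF that(1)] that(3) by blast
  have fgf: "f (g (f x)) = f x" if "x \<in> A" for x
    using counit[OF fB[OF that]] f_mono[OF that gA[OF fB[OF that]] unit[OF that]] by blast
  have gfg: "g (f (g y)) = g y" if "y \<in> B" for y
    using unit[OF gA[OF that]] g_mono[OF fB[OF gA[OF that]] that counit[OF that]] by blast
  show ?thesis
    unfolding mutual_order_iso_def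
  proof (intro conjI ballI)
    fix x x' assume "x \<in> f ` A" "x' \<in> f ` A"
    then obtain a a' where a: "a \<in> A" "x = f a" and a': "a' \<in> A" "x' = f a'" by blast
    show "x \<subseteq> x' \<longleftrightarrow> g x \<subseteq> g x'"
    proof
      assume "x \<subseteq> x'"
      then show "g x \<subseteq> g x'" using g_mono[OF fB[OF a(1)] fB[OF a'(1)]] a a' by simp
    next
      assume "g x \<subseteq> g x'"
      then have "f (g x) \<subseteq> f (g x')"
        using f_mono[OF gA[OF fB[OF a(1)]] gA[OF fB[OF a'(1)]]] a a' by simp
      then show "x \<subseteq> x'" using fgf a a' by simp
    qed
  next
    fix y y' assume "y \<in> g ` B" "y' \<in> g ` B"
    then obtain b b' where b: "b \<in> B" "y = g b" and b': "b' \<in> B" "y' = g b'" by blast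
    show "y \<subseteq> y' \<longleftrightarrow> f y \<subseteq> f y'"
    proof
      assume "y \<subseteq> y'"
      then show "f y \<subseteq> f y'" using f_mono[OF gA[OF b(1)] gA[OF b'(1)]] b b' by simp
    next
      assume "f y \<subseteq> f y'"
      then have "g (f y) \<subseteq> g (f y')"
        using g_mono[OF fB[OF gA[OF b(1)]] fB[OF gA[OF b'(1)]]] b b' by simp
      then show "y \<subseteq> y'" using gfg b b' by simp
    qed
  qed (use fgf gfg fB gA in auto)
qed

lemma le_himp_iff:
  assumes "frame_law TYPE('a::complete_lattice)"
  shows "y \<le> himp a b \<longleftrightarrow> inf y a \<le> (b::'a)"
proof
  have "inf (himp a b) a = (SUP x\<in>{x. inf x a \<le> b}. inf x a)"
    using assms unfolding frame_law_def himp_def by blast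
  also have "\<dots> \<le> b" by (rule SUP_least) simp
  finally have "inf (himp a b) a \<le> b" .
  then show "inf y a \<le> b" if "y \<le> himp a b"
    using that inf_mono order_trans by blast
next
  show "y \<le> himp a b" if "inf y a \<le> b"
    unfolding himp_def using that by (simp add: Sup_upper)
qed

lemma himp_mono: "b \<le> b' \<Longrightarrow> himp a b \<le> himp a b'"
  unfolding himp_def by (rule Sup_subset_mono) (auto intro: order_trans)

lemma himp_himp_same:
  assumes "frame_law TYPE('a::complete_lattice)"
  shows "himp a (himp a b) = himp a (b::'a)"
proof -
  have "y \<le> himp a (himp a b) \<longleftrightarrow> y \<le> himp a b" for y
    by (simp add: le_himp_iff[OF assms] inf_assoc)
  then show ?thesis by (meson order_antisym order_refl)
qed

lemma opn_eq_fixed_points: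
  assumes "frame_law TYPE('a::complete_lattice)"
  shows "opn a = {x::'a. himp a x = x}"
proof
  show "opn a \<subseteq> {x. himp a x = x}"
    unfolding opn_def using himp_himp_same[OF assms] by blast
  show "{x. himp a x = x} \<subseteq> opn a"
    unfolding opn_def by (blast intro: sym)
qed

lemma Inf_in_opn:
  assumes frame: "frame_law TYPE('a::complete_lattice)" and "B \<subseteq> opn (a::'a)"
  shows "Inf B \<in> opn a"
proof -
  have fixed: "himp a s = s" if "s \<in> B" for s
    using assms opn_eq_fixed_points[OF frame] that by blast
  have "himp a (Inf B) \<le> s" if "s \<in> B" for s
    using himp_mono[OF Inf_lower[OF that], of a] fixed[OF that] by simp
  then have "himp a (Inf B) \<le> Inf B"
    by (rule Inf_greatest)
  moreover have "Inf B \<le> himp a (Inf B)"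
    using le_himp_iff[OF frame] by simp
  ultimately show ?thesis
    unfolding opn_eq_fixed_points[OF frame] by simp
qed

lemma Inf_in_S_o:
  assumes "frame_law TYPE('a::complete_lattice)" and "S \<in> (S_o :: 'a set set)" and "A \<subseteq> S"
  shows "Inf A \<in> S"
  using assms Inf_in_opn unfolding S_o_def by blast

lemma fit_in_S_o: "fit S \<in> S_o"
  unfolding fit_def S_o_def by blast

lemma fit_subset_iff: "S \<in> S_o \<Longrightarrow> fit T \<subseteq> S \<longleftrightarrow> T \<subseteq> S"
  unfolding fit_def S_o_def by blast

definition sl_joins :: "'a::complete_lattice set set \<Rightarrow> 'a set set" where
  "sl_joins X = {sl_join F | F. F \<subseteq> X}"

lemma sl_join_mono: "F \<subseteq> G \<Longrightarrow> sl_join F \<subseteq> sl_join G"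
  unfolding sl_join_def by blast

lemma sl_join_upper: "U \<in> F \<Longrightarrow> U \<subseteq> sl_join F"
proof
  fix u assume "U \<in> F" "u \<in> U"
  then have "{u} \<subseteq> \<Union>F" by blast
  then show "u \<in> sl_join F"
    unfolding sl_join_def by (metis (mono_tags) cInf_singleton mem_Collect_eq)
qed

lemma intX_in_sl_joins: "intX X S \<in> sl_joins X"
  unfolding intX_def sl_joins_def by blast

lemma intX_subset: "(\<And>A. A \<subseteq> S \<Longrightarrow> Inf A \<in> S) \<Longrightarrow> intX X S \<subseteq> S"
  unfolding intX_def sl_join_def by blast

lemma subset_intX_iff:
  assumes "T \<in> sl_joins X" and "\<And>A. A \<subseteq> S \<Longrightarrow> Inf A \<in> S"
  shows "T \<subseteq> intX X S \<longleftrightarrow> T \<subseteq> S"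
proof
  show "T \<subseteq> S" if "T \<subseteq> intX X S"
    using that intX_subset[OF assms(2)] by blast
next
  assume "T \<subseteq> S"
  obtain F where "F \<subseteq> X" "T = sl_join F"
    using assms(1) unfolding sl_joins_def by blast
  moreover from this have "F \<subseteq> {U \<in> X. U \<subseteq> S}"
    using \<open>T \<subseteq> S\<close> sl_join_upper by blast
  ultimately show "T \<subseteq> intX X S"
    unfolding intX_def by (simp add: sl_join_mono)
qed

lemma mutual_order_iso_fit_intX:
  assumes "frame_law TYPE('a::complete_lattice)"
  shows "mutual_order_iso (fit ` sl_joins (X :: 'a set set)) (intX X ` S_o) (intX X) fit"
proof (rule mutual_order_iso_images_of_galois_connection)
  fix T S assume "T \<in> sl_joins X" "S \<in> (S_o :: 'a set set)"
  then show "fit T \<subseteq> S \<longleftrightarrow> T \<subseteq> intX X S"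
    using fit_subset_iff subset_intX_iff Inf_in_S_o[OF assms] by metis
qed (auto simp: fit_in_S_o intX_in_sl_joins)

lemma intX_S_op_eq_sp: "intX S_op = sp"
  unfolding intX_def sp_def S_op_def by (rule ext, rule arg_cong[where f = sl_join]) blast

theorem mainTheorem16:
  assumes "frame_law TYPE('a::complete_lattice)"
  shows "mutual_order_iso (fit ` (S_b :: 'a set set)) (intX S_lc ` S_o) (intX S_lc) fit
       \<and> mutual_order_iso (fit ` (S_c :: 'a set set)) (intX closed_sublocales ` S_o) (intX closed_sublocales) fit
       \<and> mutual_order_iso (fit ` (S_k :: 'a set set)) (intX S_co ` S_o) (intX S_co) fit
       \<and> mutual_order_iso (fit ` (S_sp :: 'a set set)) (intX S_op ` S_o) (intX S_op) fit
       \<and> intX S_op ` (S_o :: 'a set set) = sp ` S_o"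
proof -
  have joins: "S_b = sl_joins S_lc" "S_c = sl_joins closed_sublocales"
    "S_k = sl_joins S_co" "S_sp = sl_joins S_op"
    unfolding S_b_def S_c_def S_k_def S_sp_def sl_joins_def by rule+
  show ?thesis
    unfolding joins by (intro conjI mutual_order_iso_fit_intX[OF assms]) (simp add: intX_S_op_eq_sp)
qed

end
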